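(* Let $(U,\mathrm{dist})$ be a metric space, $\Lambda\in\mathbb{R}_{>0}\cup\{\infty\}$, $f:U\to\mathbb{R}$ a $\Lambda$-locally Lipschitz function, and $g$ a smooth growth function on $U$. Then the function $B^*:U\to\mathbb{R}_{\ge0}$, $B^*(x)=\sup_{z\in U}\frac{\mathrm{L}_{f,\Lambda}(z)}{g(x,z)}$, is a $g$-smooth upper bound on the pointwise Lipschitz constant $\mathrm{L}_{f,\Lambda}$, i.e. (1) $B^*(x)\ge\mathrm{L}_{f,\Lambda}(x)$ for all $x\in U$, and (2) $B^*(x)\le g(x,x')\,B^*(x')$ for all $x,x'\in U$.
   Context: $f$ is $\Lambda$-locally Lipschitz if there is $K\ge0$ with $|f(x)-f(x')|\le K\,\mathrm{dist}(x,x')$ whenever $\mathrm{dist}(x,x')\le\Lambda$. For $x\in U$, $\mathrm{L}_{f,\Lambda}(x)$ is the infimum of all $K$ such that $|f(x)-f(x')|\le K\,\mathrm{dist}(x,x')$ for all $x'\in U$ with $\mathrm{dist}(x,x')\le\Lambda$. A smooth growth function is $g:U\times U\to\mathbb{R}_{>0}$ of the form $g(x,x')=g_0(\mathrm{dist}(x,x'))$, where $g_0:\mathbb{R}_{\ge0}\to\mathbb{R}_{\ge1}$ is monotonically increasing, $g_0(0)=1$, and $g_0(r_1+r_2)\le g_0(r_1)g_0(r_2)$ for all $r_1,r_2\ge0$. *)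

theory Defs
  imports "HOL-Analysis.Analysis"
begin

definition locally_lipschitz :: "'a::metric_space set \<Rightarrow> ereal \<Rightarrow> ('a \<Rightarrow> real) \<Rightarrow> bool" where
  "locally_lipschitz U \<Lambda> f \<longleftrightarrow>
     (\<exists>K\<ge>0. \<forall>x\<in>U. \<forall>x'\<in>U. ereal (dist x x') \<le> \<Lambda> \<longrightarrow> \<bar>f x - f x'\<bar> \<le> K * dist x x')"

definition pointwise_lip :: "'a::metric_space set \<Rightarrow> ereal \<Rightarrow> ('a \<Rightarrow> real) \<Rightarrow> 'a \<Rightarrow> real" where
  "pointwise_lip U \<Lambda> f x =
     Inf {K. K \<ge> 0 \<and> (\<forall>x'\<in>U. ereal (dist x x') \<le> \<Lambda> \<longrightarrow> \<bar>f x - f x'\<bar> \<le> K * dist x x')}"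

text \<open>The profile g0 of a smooth growth function g(x,x') = g0(dist x x').\<close>
definition smooth_growth_profile :: "(real \<Rightarrow> real) \<Rightarrow> bool" where
  "smooth_growth_profile g0 \<longleftrightarrow>
     mono_on {0..} g0 \<and> (\<forall>r\<ge>0. g0 r \<ge> 1) \<and> g0 0 = 1 \<and>
     (\<forall>r1\<ge>0. \<forall>r2\<ge>0. g0 (r1 + r2) \<le> g0 r1 * g0 r2)"

end

theory Submission
  imports Defs
begin

text \<open>
  Write L for the pointwise Lipschitz constant. Since f is \<Lambda>-locally Lipschitz, L is
  nonnegative and bounded on U, so the supremum defining B is finite, and
  B(x) \<ge> L(x) / g(x,x) = L(x). By the triangle inequality and the monotonicity and
  submultiplicativity of g0, g(x',z) \<le> g(x,x') g(x,z); dividing L(z) by both sides and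
  taking suprema over z gives B(x) \<le> g(x,x') B(x').
\<close>

lemma pointwise_lip_bounds:
  assumes "K \<ge> 0"
    and "\<forall>x'\<in>U. ereal (dist z x') \<le> \<Lambda> \<longrightarrow> \<bar>f z - f x'\<bar> \<le> K * dist z x'"
  shows "0 \<le> pointwise_lip U \<Lambda> f z" and "pointwise_lip U \<Lambda> f z \<le> K"
proof -
  let ?S = "{K. K \<ge> 0 \<and> (\<forall>x'\<in>U. ereal (dist z x') \<le> \<Lambda> \<longrightarrow> \<bar>f z - f x'\<bar> \<le> K * dist z x')}"
  have K: "K \<in> ?S"
    using assms by simp
  have "bdd_below ?S"
    by (rule bdd_belowI[where m = 0]) auto
  with K show "pointwise_lip U \<Lambda> f z \<le> K"
    unfolding pointwise_lip_def by (rule cInf_lower)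
  from K show "0 \<le> pointwise_lip U \<Lambda> f z"
    unfolding pointwise_lip_def by (intro cInf_greatest) auto
qed

lemma locally_lipschitz_pointwise_lip_bounded:
  assumes "locally_lipschitz U \<Lambda> f"
  shows "bdd_above (pointwise_lip U \<Lambda> f ` U)" and "z \<in> U \<Longrightarrow> 0 \<le> pointwise_lip U \<Lambda> f z"
proof -
  obtain K where "K \<ge> 0"
    and K: "\<forall>x\<in>U. \<forall>x'\<in>U. ereal (dist x x') \<le> \<Lambda> \<longrightarrow> \<bar>f x - f x'\<bar> \<le> K * dist x x'"
    using assms unfolding locally_lipschitz_def by blast
  have bounds: "0 \<le> pointwise_lip U \<Lambda> f z \<and> pointwise_lip U \<Lambda> f z \<le> K" if "z \<in> U" for z
    using pointwise_lip_bounds[OF \<open>K \<ge> 0\<close> bspec[OF K that]] by simp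
  then show "bdd_above (pointwise_lip U \<Lambda> f ` U)"
    by (intro bdd_aboveI2[where M = K]) blast
  show "z \<in> U \<Longrightarrow> 0 \<le> pointwise_lip U \<Lambda> f z"
    using bounds by blast
qed

lemma smooth_growth_profile_ge_one:
  assumes "smooth_growth_profile g0" and "r \<ge> 0"
  shows "1 \<le> g0 r"
  using assms unfolding smooth_growth_profile_def by blast

lemma smooth_growth_profile_dist_submult:
  assumes "smooth_growth_profile g0"
  shows "g0 (dist y z) \<le> g0 (dist x y) * g0 (dist x z)"
proof -
  have mono: "mono_on {0..} g0"
    and submult: "\<And>r1 r2. r1 \<ge> 0 \<Longrightarrow> r2 \<ge> 0 \<Longrightarrow> g0 (r1 + r2) \<le> g0 r1 * g0 r2"
    using assms unfolding smooth_growth_profile_def by auto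
  have "dist y z \<le> dist x y + dist x z"
    by (metis dist_commute dist_triangle)
  then have "g0 (dist y z) \<le> g0 (dist x y + dist x z)"
    by (intro mono_onD[OF mono]) auto
  also have "\<dots> \<le> g0 (dist x y) * g0 (dist x z)"
    by (intro submult) auto
  finally show ?thesis .
qed

lemma bdd_above_divide_ge_one:
  fixes h w :: "'a \<Rightarrow> real"
  assumes "bdd_above (h ` U)" and "\<And>z. z \<in> U \<Longrightarrow> 0 \<le> h z" and "\<And>z. 1 \<le> w z"
  shows "bdd_above ((\<lambda>z. h z / w z) ` U)"
proof -
  obtain M where M: "\<And>z. z \<in> U \<Longrightarrow> h z \<le> M"
    using assms(1) by (auto simp: bdd_above_def)
  have "h z / w z \<le> M" if "z \<in> U" for z
  proof -
    have "h z / w z \<le> h z"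
      using divide_left_mono[of 1 "w z" "h z"] assms(2,3)[of z] that by simp
    with M[OF that] show ?thesis
      by linarith
  qed
  then show ?thesis
    by (intro bdd_aboveI2[where M = M])
qed

lemma weighted_SUP_ge:
  fixes h :: "'a \<Rightarrow> real"
  assumes "x \<in> U" and "bdd_above (h ` U)" and "\<And>z. z \<in> U \<Longrightarrow> 0 \<le> h z"
    and "\<And>z. 1 \<le> w z" and "w x = 1"
  shows "h x \<le> (SUP z\<in>U. h z / w z)"
proof -
  have "h x / w x \<le> (SUP z\<in>U. h z / w z)"
    using assms by (intro cSUP_upper bdd_above_divide_ge_one)
  then show ?thesis
    using assms(5) by simp
qed

lemma weighted_SUP_submult:
  fixes h :: "'a \<Rightarrow> real"
  assumes "U \<noteq> {}" and "bdd_above (h ` U)" and "\<And>z. z \<in> U \<Longrightarrow> 0 \<le> h z"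
    and "\<And>z. 1 \<le> w z" and "\<And>z. 1 \<le> w' z" and "c \<ge> 0"
    and "\<And>z. w' z \<le> c * w z"
  shows "(SUP z\<in>U. h z / w z) \<le> c * (SUP z\<in>U. h z / w' z)"
proof (rule cSUP_least[OF assms(1)])
  fix z assume "z \<in> U"
  have "h z * w' z \<le> h z * (c * w z)"
    using assms(3,7) \<open>z \<in> U\<close> by (simp add: mult_left_mono)
  then have "h z / w z \<le> c * (h z / w' z)"
    using assms(4,5)[of z] by (simp add: divide_le_eq le_divide_eq algebra_simps)
  also have "\<dots> \<le> c * (SUP z\<in>U. h z / w' z)"
    using assms \<open>z \<in> U\<close> by (intro mult_left_mono cSUP_upper bdd_above_divide_ge_one) auto
  finally show "h z / w z \<le> c * (SUP z\<in>U. h z / w' z)" .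
qed

theorem mainTheorem2:
  fixes U :: "'a::metric_space set" and \<Lambda> :: ereal and f :: "'a \<Rightarrow> real"
    and g0 :: "real \<Rightarrow> real" and g :: "'a \<Rightarrow> 'a \<Rightarrow> real" and B :: "'a \<Rightarrow> real"
  assumes "\<Lambda> > 0"
    and "locally_lipschitz U \<Lambda> f"
    and "smooth_growth_profile g0"
    and "\<And>x x'. g x x' = g0 (dist x x')"
    and "\<And>x. B x = (SUP z\<in>U. pointwise_lip U \<Lambda> f z / g x z)"
  shows "(\<forall>x\<in>U. B x \<ge> pointwise_lip U \<Lambda> f x) \<and>
         (\<forall>x\<in>U. \<forall>x'\<in>U. B x \<le> g x x' * B x')"
proof -
  note L_bounded = locally_lipschitz_pointwise_lip_bounded[OF assms(2)]
  have g_ge_one: "1 \<le> g x z" for x z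
    using assms(3,4) smooth_growth_profile_ge_one by simp
  have g_refl: "g x x = 1" for x
    using assms(3,4) by (simp add: smooth_growth_profile_def)
  have g_submult: "g x' z \<le> g x x' * g x z" for x x' z
    using assms(3,4) smooth_growth_profile_dist_submult by simp
  have "B x \<ge> pointwise_lip U \<Lambda> f x" if "x \<in> U" for x
    unfolding assms(5) using that L_bounded g_ge_one g_refl by (intro weighted_SUP_ge)
  moreover have "B x \<le> g x x' * B x'" if "x' \<in> U" for x x'
  proof -
    have "0 \<le> g x x'"
      using g_ge_one[of x x'] by linarith
    then show ?thesis
      unfolding assms(5) using that L_bounded g_ge_one g_submult
      by (intro weighted_SUP_submult) auto
  qed
  ultimately show ?thesis
    by blast
qed

end
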